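(* Let $\mathcal{A}$ be a finite or countable alphabet, $\mathcal{M}$ a countable set of probability measures on $\mathcal{A}^\infty$, $w:\mathcal{M}\to(0,1]$ a prior with $\sum_\nu w_\nu=1$, $\xi$ the Bayes mixture, $\mu\in\mathcal{M}$ and $\delta\in(0,1)$, with $\hat d_t:=c_t/(w_\mu\delta)$. Then: (1) $\mathbb{E}_\mu\sum_{t=1}^\infty\hat d_t\le\frac{\mathrm{Ent}(w)}{\delta w_\mu^2}$; (2) with $\mu$-probability at least $1-\delta$, $\sum_{t=1}^\infty\hat d_t\le\frac{\mathrm{Ent}(w)}{\delta^2w_\mu^2}$.
   Context: $\mathcal{A}^\infty$ carries the $\sigma$-algebra generated by cylinders $\Gamma_x=\{x\omega\}$; for a measure $\rho$, $\rho(x):=\rho(\Gamma_x)$, $\rho(y|x):=\rho(xy)/\rho(x)$. Bayes mixture $\xi(A):=\sum_\nu w_\nu\nu(A)$; posterior $w_\nu(x):=w_\nu\nu(x)/\xi(x)$; entropy $\mathrm{Ent}(w):=-\sum_\nu w_\nu\ln w_\nu$ (natural logs). For a finite string $x$, $d_x(\nu,\xi):=\sum_a\nu(a|x)\ln\frac{\nu(a|x)}{\xi(a|x)}$, and for $\omega\in\mathcal{A}^\infty$, $c_t(\omega):=\sum_{\nu\in\mathcal{M}}w_\nu(\omega_{<t})d_{\omega_{<t}}(\nu,\xi)$ with $\omega_{<t}=\omega_1\cdots\omega_{t-1}$. *)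

theory Defs
  imports "HOL-Probability.Probability"
begin

text \<open>Infinite sequences over the alphabet 'a are streams; the sigma algebra on them
is that of stream_space (count_space UNIV), generated by the cylinders.\<close>

definition cyl :: "'a list \<Rightarrow> 'a stream set" where
  "cyl x = {\<omega>. stake (length x) \<omega> = x}"

definition mcyl :: "'a stream measure \<Rightarrow> 'a list \<Rightarrow> real" where
  "mcyl \<rho> x = measure \<rho> (cyl x)"

definition condp :: "('a list \<Rightarrow> real) \<Rightarrow> 'a list \<Rightarrow> 'a \<Rightarrow> real" where
  "condp f x a = f (x @ [a]) / f x"

definition xi :: "'a stream measure set \<Rightarrow> ('a stream measure \<Rightarrow> real) \<Rightarrow> 'a list \<Rightarrow> real" where
  "xi M w x = (\<Sum>\<^sub>\<infinity>\<nu>\<in>M. w \<nu> * mcyl \<nu> x)"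

definition post :: "'a stream measure set \<Rightarrow> ('a stream measure \<Rightarrow> real) \<Rightarrow> 'a stream measure \<Rightarrow> 'a list \<Rightarrow> real" where
  "post M w \<nu> x = w \<nu> * mcyl \<nu> x / xi M w x"

definition dkl :: "'a stream measure set \<Rightarrow> ('a stream measure \<Rightarrow> real) \<Rightarrow> 'a stream measure \<Rightarrow> 'a list \<Rightarrow> real" where
  "dkl M w \<nu> x = (\<Sum>\<^sub>\<infinity>a\<in>UNIV. condp (mcyl \<nu>) x a * ln (condp (mcyl \<nu>) x a / condp (xi M w) x a))"

text \<open>c_t(omega) = sum_nu w_nu(omega_<t) d_{omega_<t}(nu,xi), with omega_<t = stake (t-1) omega,
  valued in [0,\<infinity>] since the sum over a countable model class may diverge.\<close>
definition ct :: "'a stream measure set \<Rightarrow> ('a stream measure \<Rightarrow> real) \<Rightarrow> nat \<Rightarrow> 'a stream \<Rightarrow> ennreal" where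
  "ct M w t \<omega> = (\<Sum>\<^sub>\<infinity>\<nu>\<in>M. ennreal (post M w \<nu> (stake (t - 1) \<omega>) * dkl M w \<nu> (stake (t - 1) \<omega>)))"

definition Ent :: "'a stream measure set \<Rightarrow> ('a stream measure \<Rightarrow> real) \<Rightarrow> ennreal" where
  "Ent M w = (\<Sum>\<^sub>\<infinity>\<nu>\<in>M. ennreal (- w \<nu> * ln (w \<nu>)))"

definition dhat :: "'a stream measure set \<Rightarrow> ('a stream measure \<Rightarrow> real) \<Rightarrow> 'a stream measure \<Rightarrow> real \<Rightarrow> nat \<Rightarrow> 'a stream \<Rightarrow> ennreal" where
  "dhat M w \<mu> \<delta> t \<omega> = ct M w t \<omega> / ennreal (w \<mu> * \<delta>)"

end

theory Submission
  imports Defs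
begin

text \<open>
  Fix a model \<nu>. Since w_\<nu> \<nu> \<le> \<xi> on every cylinder, the relative entropy of \<nu> with respect
  to \<xi> on the strings of length t is at most ln (1 / w_\<nu>), and by the chain rule it telescopes
  into the \<nu>-expected divergences d_x(\<nu>, \<xi>) at the times before t. As also w_\<mu> \<mu> \<le> \<xi> and
  \<xi>(x) w_\<nu>(x) = w_\<nu> \<nu>(x), the \<mu>-expectation of c_t is at most 1 / w_\<mu> times
  \<Sum>_\<nu> w_\<nu> E_\<nu> d(\<nu>, \<xi>), so summing over t gives E_\<mu> \<Sum>_t c_t \<le> Ent(w) / w_\<mu>.
  Dividing by w_\<mu> \<delta> gives (1), and Markov's inequality turns (1) into (2).
\<close>

lemma infsum_ennreal_of_nonneg:
  fixes f :: "'b \<Rightarrow> real"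
  assumes "f summable_on A" "\<And>x. x \<in> A \<Longrightarrow> 0 \<le> f x"
  shows "(\<Sum>\<^sub>\<infinity>x\<in>A. ennreal (f x)) = ennreal (\<Sum>\<^sub>\<infinity>x\<in>A. f x)"
proof -
  have "sum (ennreal \<circ> f) F = ennreal (sum f F)" if "finite F" "F \<subseteq> A" for F
    using that assms(2) by (simp add: subset_iff sum_ennreal)
  then have "infsum (ennreal \<circ> f) A = ennreal (infsum f A)"
    by (simp add: infsum_comm_additive_general assms(1))
  then show ?thesis by (simp add: comp_def)
qed

lemma has_sum_of_infsum_ennreal:
  fixes f :: "'b \<Rightarrow> real"
  assumes nonneg: "\<And>x. x \<in> A \<Longrightarrow> 0 \<le> f x"
    and sum_eq: "(\<Sum>\<^sub>\<infinity>x\<in>A. ennreal (f x)) = ennreal c" and "0 \<le> c"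
  shows "(f has_sum c) A"
proof -
  have bounded: "sum f F \<le> c" if "finite F" "F \<subseteq> A" for F
  proof -
    have "ennreal (sum f F) = (\<Sum>\<^sub>\<infinity>x\<in>F. ennreal (f x))"
      using that nonneg by (simp add: subset_iff sum_ennreal)
    also have "\<dots> \<le> (\<Sum>\<^sub>\<infinity>x\<in>A. ennreal (f x))"
      by (rule infsum_mono_neutral) (use that in \<open>auto simp: nonneg_summable_on_complete\<close>)
    finally show ?thesis using sum_eq \<open>0 \<le> c\<close> by simp
  qed
  have summable: "f summable_on A"
    by (rule nonneg_bdd_above_summable_on) (use nonneg bounded in \<open>auto simp: bdd_above_def\<close>)
  then have "infsum f A = c"
    using infsum_ennreal_of_nonneg[OF summable nonneg] sum_eq \<open>0 \<le> c\<close> infsum_nonneg[of A f] nonneg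
    by simp
  with summable show ?thesis by (metis has_sum_infsum)
qed

lemma infsum_eq_nn_integral_count_space:
  fixes f :: "'b \<Rightarrow> ennreal"
  assumes "countable A"
  shows "(\<Sum>\<^sub>\<infinity>x\<in>A. f x) = (\<integral>\<^sup>+x. f x \<partial>count_space A)"
proof (rule antisym)
  have "(\<Sum>\<^sub>\<infinity>x\<in>A. f x) = (SUP F\<in>{F. finite F \<and> F \<subseteq> A}. sum f F)"
    by (rule nonneg_infsum_complete) auto
  also have "\<dots> \<le> (\<integral>\<^sup>+x. f x \<partial>count_space A)"
  proof (rule SUP_least, clarify)
    fix F assume F: "finite F" "F \<subseteq> A"
    have "sum f F = (\<integral>\<^sup>+x. f x * indicator F x \<partial>count_space A)"
      by (subst nn_integral_count_space'[of F]) (use F in auto)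
    also have "\<dots> \<le> (\<integral>\<^sup>+x. f x \<partial>count_space A)"
      by (intro nn_integral_mono) (auto split: split_indicator)
    finally show "sum f F \<le> \<dots>" .
  qed
  finally show "(\<Sum>\<^sub>\<infinity>x\<in>A. f x) \<le> (\<integral>\<^sup>+x. f x \<partial>count_space A)" .
next
  show "(\<integral>\<^sup>+x. f x \<partial>count_space A) \<le> (\<Sum>\<^sub>\<infinity>x\<in>A. f x)"
  proof (cases "finite A")
    case True
    then show ?thesis by (simp add: nn_integral_count_space_finite)
  next
    case False
    define g where "g = from_nat_into A"
    have bij: "bij_betw g UNIV A"
      unfolding g_def using bij_betw_from_nat_into[OF assms False] .
    have "(\<integral>\<^sup>+x. f x \<partial>count_space A) = (\<Sum>i. f (g i))"
      using nn_integral_bij_count_space[OF bij, of f] by (simp add: nn_integral_count_space_nat)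
    also have "\<dots> = (SUP n. \<Sum>i<n. f (g i))" by (rule suminf_eq_SUP)
    also have "\<dots> \<le> (\<Sum>\<^sub>\<infinity>x\<in>A. f x)"
    proof (rule SUP_least)
      fix n
      have "inj_on g {..<n}" using bij by (auto simp: bij_betw_def inj_on_def)
      then have "(\<Sum>i<n. f (g i)) = (\<Sum>\<^sub>\<infinity>x\<in>g ` {..<n}. f x)" by (simp add: sum.reindex)
      also have "\<dots> \<le> (\<Sum>\<^sub>\<infinity>x\<in>A. f x)"
        by (rule infsum_mono_neutral) (use bij in \<open>auto simp: bij_betw_def nonneg_summable_on_complete\<close>)
      finally show "(\<Sum>i<n. f (g i)) \<le> (\<Sum>\<^sub>\<infinity>x\<in>A. f x)" .
    qed
    finally show ?thesis .
  qed
qed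

lemma infsum_swap_ennreal:
  fixes f :: "'b \<Rightarrow> 'c \<Rightarrow> ennreal"
  assumes "countable A" "countable B"
  shows "(\<Sum>\<^sub>\<infinity>x\<in>A. \<Sum>\<^sub>\<infinity>y\<in>B. f x y) = (\<Sum>\<^sub>\<infinity>y\<in>B. \<Sum>\<^sub>\<infinity>x\<in>A. f x y)"
  using nn_integral_count_space_nn_integral[of A f "count_space B"] assms
  by (simp add: infsum_eq_nn_integral_count_space)

lemma infsum_cmult_ennreal:
  fixes f :: "'b \<Rightarrow> ennreal"
  assumes "countable A"
  shows "(\<Sum>\<^sub>\<infinity>x\<in>A. c * f x) = c * (\<Sum>\<^sub>\<infinity>x\<in>A. f x)"
  by (simp add: infsum_eq_nn_integral_count_space[OF assms] nn_integral_cmult)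

lemma suminf_infsum_swap_ennreal:
  fixes f :: "nat \<Rightarrow> 'b \<Rightarrow> ennreal"
  assumes "countable A"
  shows "(\<Sum>t. \<Sum>\<^sub>\<infinity>x\<in>A. f t x) = (\<Sum>\<^sub>\<infinity>x\<in>A. \<Sum>t. f t x)"
proof -
  have suminf_eq: "(\<Sum>t. g t) = (\<Sum>\<^sub>\<infinity>t\<in>UNIV. g t)" for g :: "nat \<Rightarrow> ennreal"
    by (simp add: infsum_eq_nn_integral_count_space nn_integral_count_space_nat)
  show ?thesis
    unfolding suminf_eq by (rule infsum_swap_ennreal) (use assms in auto)
qed

lemma has_sum_diff:
  fixes f g :: "'b \<Rightarrow> 'c::topological_ab_group_add"
  assumes "(f has_sum a) A" "(g has_sum b) A"
  shows "((\<lambda>x. f x - g x) has_sum (a - b)) A"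
  using has_sum_add[OF assms(1) has_sum_uminus[THEN iffD2, of g A "-b"]] assms(2) by simp

lemma summable_on_if_abs_le:
  fixes f P Q :: "'b \<Rightarrow> real"
  assumes "P summable_on A" "Q summable_on A" "\<And>x. x \<in> A \<Longrightarrow> \<bar>f x\<bar> \<le> c * P x + Q x"
  shows "f summable_on A"
proof -
  have "(\<lambda>x. c * P x + Q x) summable_on A"
    by (intro summable_on_add summable_on_cmult_right assms)
  then have "(\<lambda>x. norm (f x)) summable_on A"
    by (rule summable_on_comparison_test) (use assms(3) in auto)
  then show ?thesis using summable_on_iff_abs_summable_on_real by blast
qed

lemma diff_le_mult_ln_div:
  fixes p q :: real
  assumes "0 \<le> p" "0 \<le> q" "0 < p \<Longrightarrow> 0 < q"
  shows "p - q \<le> p * ln (p / q)"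
proof (cases "p = 0")
  case False
  then have p: "0 < p" and q: "0 < q" using assms by auto
  have "1 - q / p \<le> ln (p / q)"
    using ln_le_minus_one[of "q / p"] p q by (simp add: ln_div)
  from mult_left_mono[OF this, of p] p show ?thesis by (simp add: algebra_simps)
qed (use assms in auto)

lemma gibbs_inequality:
  fixes p q :: "'b \<Rightarrow> real"
  assumes "(p has_sum 1) A" "(q has_sum 1) A"
    and "\<And>a. a \<in> A \<Longrightarrow> 0 \<le> p a" "\<And>a. a \<in> A \<Longrightarrow> 0 \<le> q a"
    and "\<And>a. a \<in> A \<Longrightarrow> 0 < p a \<Longrightarrow> 0 < q a"
    and "(\<lambda>a. p a * ln (p a / q a)) summable_on A"
  shows "0 \<le> (\<Sum>\<^sub>\<infinity>a\<in>A. p a * ln (p a / q a))"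
proof -
  have diff: "((\<lambda>a. p a - q a) has_sum 0) A" using has_sum_diff[OF assms(1,2)] by simp
  have "(\<Sum>\<^sub>\<infinity>a\<in>A. p a - q a) \<le> (\<Sum>\<^sub>\<infinity>a\<in>A. p a * ln (p a / q a))"
    by (rule infsum_mono) (use assms diff diff_le_mult_ln_div in \<open>auto simp: summable_on_def\<close>)
  with diff show ?thesis by (simp add: infsumI)
qed

lemma countable_lists_of_length: "countable {x :: 'a::countable list. length x = t}"
  by (rule countable_subset[of _ UNIV]) auto

lemma has_sum_lists_of_length_Suc_iff:
  "((\<lambda>z. f (fst z @ [snd z])) has_sum S) ({x. length x = t} \<times> UNIV)
     \<longleftrightarrow> (f has_sum S) {x. length x = Suc t}"
proof (rule has_sum_reindex_bij_betw)
  show "bij_betw (\<lambda>z. fst z @ [snd z]) ({x. length x = t} \<times> UNIV) {x. length x = Suc t}"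
  proof (rule bij_betwI[where g = "\<lambda>y. (butlast y, last y)"])
    show "(\<lambda>y. (butlast y, last y)) \<in> {x. length x = Suc t} \<rightarrow> {x. length x = t} \<times> UNIV"
      by auto
    show "fst (butlast y, last y) @ [snd (butlast y, last y)] = y" if "y \<in> {x. length x = Suc t}" for y
      using that by (cases y rule: rev_cases) auto
  qed auto
qed

lemma has_sum_lists_of_length:
  fixes f :: "'a list \<Rightarrow> real"
  assumes nonneg: "\<And>x. 0 \<le> f x" and additive: "\<And>x. ((\<lambda>a. f (x @ [a])) has_sum f x) UNIV"
  shows "(f has_sum f []) {x. length x = t}"
proof (induction t)
  case 0
  have "{x :: 'a list. length x = 0} = {[]}" by auto
  then show ?case using has_sum_finite[of "{[]}" f] by simp
next
  case (Suc t)
  have "(\<lambda>z. f (fst z @ [snd z])) summable_on Sigma {x. length x = t} (\<lambda>_. UNIV)"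
    by (rule summable_on_SigmaI[where g = f]) (use additive Suc nonneg in \<open>auto simp: summable_on_def\<close>)
  then have "((\<lambda>z. f (fst z @ [snd z])) has_sum f []) ({x. length x = t} \<times> UNIV)"
    by (intro has_sum_SigmaI[where g = f, OF _ Suc]) (use additive in auto)
  then show ?case using has_sum_lists_of_length_Suc_iff by blast
qed

lemma has_sum_lists_of_length_SucD:
  fixes f :: "'a list \<Rightarrow> real"
  assumes "(f has_sum S) {x. length x = Suc t}"
    and "\<And>x. length x = t \<Longrightarrow> ((\<lambda>a. f (x @ [a])) has_sum g x) UNIV"
  shows "(g has_sum S) {x. length x = t}"
  using assms(1)[folded has_sum_lists_of_length_Suc_iff]
  by (rule has_sum_SigmaD) (use assms(2) in auto)

locale dominated_prefix_measures =
  fixes p q :: "'a list \<Rightarrow> real" and w :: real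
  assumes p_nonneg: "\<And>x. 0 \<le> p x"
    and p_additive: "\<And>x. ((\<lambda>a. p (x @ [a])) has_sum p x) UNIV" and p_Nil: "p [] = 1"
    and q_additive: "\<And>x. ((\<lambda>a. q (x @ [a])) has_sum q x) UNIV" and q_Nil: "q [] = 1"
    and dominated: "\<And>x. w * p x \<le> q x" and w_pos: "0 < w" and w_le_1: "w \<le> 1"
begin

definition kl_term :: "'a list \<Rightarrow> real" where
  "kl_term x = p x * ln (p x / q x)"

definition level_kl :: "nat \<Rightarrow> real" where
  "level_kl t = (\<Sum>\<^sub>\<infinity>x\<in>{x. length x = t}. kl_term x)"

definition cond_kl_term :: "'a list \<Rightarrow> 'a \<Rightarrow> real" where
  "cond_kl_term x a = condp p x a * ln (condp p x a / condp q x a)"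

definition cond_kl :: "'a list \<Rightarrow> real" where
  "cond_kl x = (\<Sum>\<^sub>\<infinity>a\<in>UNIV. cond_kl_term x a)"

lemma q_nonneg: "0 \<le> q x"
  using dominated[of x] p_nonneg[of x] w_pos by (smt (verit) mult_nonneg_nonneg)

lemma q_pos: "0 < p x \<Longrightarrow> 0 < q x"
  using dominated[of x] w_pos by (smt (verit) mult_pos_pos)

lemma kl_term_le: "kl_term x \<le> - ln w * p x"
proof (cases "p x = 0")
  case False
  then have p: "0 < p x" using p_nonneg[of x] by simp
  have "p x / q x \<le> 1 / w" using dominated[of x] w_pos q_pos[OF p] by (simp add: field_simps)
  then have "ln (p x / q x) \<le> ln (1 / w)" using p q_pos[OF p] w_pos by (subst ln_le_cancel_iff) auto
  then have "ln (p x / q x) \<le> - ln w" using w_pos by (simp add: ln_div)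
  from mult_left_mono[OF this, of "p x"] p show ?thesis unfolding kl_term_def by (simp add: algebra_simps)
qed (simp add: kl_term_def)

lemma kl_term_ge: "p x - q x \<le> kl_term x"
  unfolding kl_term_def by (rule diff_le_mult_ln_div) (use p_nonneg q_nonneg q_pos in auto)

lemma abs_kl_term_le: "\<bar>kl_term x\<bar> \<le> - ln w * p x + q x"
proof -
  have "0 \<le> - ln w * p x" using mult_nonpos_nonneg[of "ln w" "p x"] w_pos w_le_1 p_nonneg[of x] by simp
  then show ?thesis using kl_term_le[of x] kl_term_ge[of x] q_nonneg[of x] p_nonneg[of x] by linarith
qed

lemma p_has_sum_lists_of_length: "(p has_sum 1) {x. length x = t}"
  using has_sum_lists_of_length[OF p_nonneg p_additive] by (simp add: p_Nil)

lemma q_has_sum_lists_of_length: "(q has_sum 1) {x. length x = t}"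
  using has_sum_lists_of_length[OF q_nonneg q_additive] by (simp add: q_Nil)

lemma kl_term_summable_on_lists_of_length: "kl_term summable_on {x. length x = t}"
  by (rule summable_on_if_abs_le[OF _ _ abs_kl_term_le])
     (use p_has_sum_lists_of_length q_has_sum_lists_of_length in \<open>auto simp: summable_on_def\<close>)

lemma kl_term_summable_on_extensions: "(\<lambda>a. kl_term (x @ [a])) summable_on UNIV"
  by (rule summable_on_if_abs_le[OF _ _ abs_kl_term_le])
     (use p_additive q_additive in \<open>auto simp: summable_on_def\<close>)

lemma p_snoc_le: "p (x @ [a]) \<le> p x"
proof -
  have "p (x @ [a]) = (\<Sum>\<^sub>\<infinity>b\<in>{a}. p (x @ [b]))" by simp
  also have "\<dots> \<le> (\<Sum>\<^sub>\<infinity>b\<in>UNIV. p (x @ [b]))"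
    by (rule infsum_mono_neutral) (use p_additive p_nonneg in \<open>auto simp: summable_on_def[of _ UNIV]\<close>)
  also have "\<dots> = p x" using p_additive by (simp add: infsumI)
  finally show ?thesis .
qed

text \<open>The chain rule for relative entropy, one symbol at a time.\<close>

lemma p_mult_cond_kl_term:
  "p x * cond_kl_term x a = kl_term (x @ [a]) - p (x @ [a]) * ln (p x / q x)"
proof (cases "p x = 0 \<or> p (x @ [a]) = 0")
  case True
  then have "p (x @ [a]) = 0" using p_snoc_le[of x a] p_nonneg[of "x @ [a]"] by auto
  then show ?thesis by (simp add: cond_kl_term_def kl_term_def condp_def)
next
  case False
  then have p: "0 < p x" "0 < p (x @ [a])" using p_nonneg by (auto simp: order_le_less)
  then have q: "0 < q x" "0 < q (x @ [a])" using q_pos by auto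
  have "(p (x @ [a]) / p x) / (q (x @ [a]) / q x) = (p (x @ [a]) / q (x @ [a])) / (p x / q x)"
    using p q by (simp add: field_simps)
  then have ln_eq: "ln ((p (x @ [a]) / p x) / (q (x @ [a]) / q x))
      = ln (p (x @ [a]) / q (x @ [a])) - ln (p x / q x)"
    using p q by (simp add: ln_div ln_mult)
  have "p x * cond_kl_term x a = p (x @ [a]) * ln ((p (x @ [a]) / p x) / (q (x @ [a]) / q x))"
    using p by (simp add: cond_kl_term_def condp_def)
  then show ?thesis unfolding ln_eq kl_term_def by (simp add: algebra_simps)
qed

lemma has_sum_p_mult_cond_kl_term:
  "((\<lambda>a. p x * cond_kl_term x a) has_sum ((\<Sum>\<^sub>\<infinity>a\<in>UNIV. kl_term (x @ [a])) - kl_term x)) UNIV"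
proof -
  have "((\<lambda>a. p (x @ [a]) * ln (p x / q x)) has_sum kl_term x) UNIV"
    unfolding kl_term_def by (rule has_sum_cmult_left[OF p_additive])
  from has_sum_diff[OF _ this] kl_term_summable_on_extensions show ?thesis
    by (simp add: p_mult_cond_kl_term)
qed

lemma cond_kl_nonneg: "0 \<le> cond_kl x"
proof (cases "p x = 0")
  case True
  \<comment> \<open>then every conditional probability is the junk value p (x @ [a]) / 0 = 0\<close>
  then show ?thesis by (simp add: cond_kl_def cond_kl_term_def condp_def)
next
  case False
  then have p: "0 < p x" using p_nonneg[of x] by simp
  have "(cond_kl_term x has_sum (((\<Sum>\<^sub>\<infinity>a\<in>UNIV. kl_term (x @ [a])) - kl_term x) / p x)) UNIV"
    using has_sum_p_mult_cond_kl_term[of x] has_sum_cmult_right_iff[of "p x" "cond_kl_term x"] p by simp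
  moreover have "((\<lambda>a. condp f x a) has_sum 1) UNIV"
    if "0 < f x" "\<And>y. ((\<lambda>a. f (y @ [a])) has_sum f y) UNIV" for f
    using has_sum_cmult_right[OF that(2)[of x], of "1 / f x"] that(1) by (simp add: condp_def)
  ultimately show ?thesis
    unfolding cond_kl_def cond_kl_term_def
    by (intro gibbs_inequality)
       (use p q_pos p_additive q_additive p_nonneg q_nonneg in \<open>auto simp: summable_on_def condp_def zero_less_divide_iff\<close>)
qed

lemma p_mult_cond_kl: "p x * cond_kl x = (\<Sum>\<^sub>\<infinity>a\<in>UNIV. kl_term (x @ [a])) - kl_term x"
proof (cases "p x = 0")
  case True
  then have "((\<lambda>a::'a. 0::real) has_sum ((\<Sum>\<^sub>\<infinity>a\<in>UNIV. kl_term (x @ [a])) - kl_term x)) UNIV"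
    using has_sum_p_mult_cond_kl_term[of x] by simp
  then have "(\<Sum>\<^sub>\<infinity>a\<in>UNIV. kl_term (x @ [a])) - kl_term x = 0"
    using has_sum_unique[OF _ has_sum_0_simp] by blast
  with True show ?thesis by simp
next
  case False
  then have "(cond_kl_term x has_sum (((\<Sum>\<^sub>\<infinity>a\<in>UNIV. kl_term (x @ [a])) - kl_term x) / p x)) UNIV"
    using has_sum_p_mult_cond_kl_term[of x] has_sum_cmult_right_iff[of "p x" "cond_kl_term x"] by simp
  with False show ?thesis by (simp add: cond_kl_def infsumI)
qed

lemma has_sum_p_mult_cond_kl:
  "((\<lambda>x. p x * cond_kl x) has_sum (level_kl (Suc t) - level_kl t)) {x. length x = t}"
proof -
  have "((\<lambda>x. \<Sum>\<^sub>\<infinity>a\<in>UNIV. kl_term (x @ [a])) has_sum level_kl (Suc t)) {x. length x = t}"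
    by (rule has_sum_lists_of_length_SucD[where f = kl_term])
       (use kl_term_summable_on_lists_of_length kl_term_summable_on_extensions in \<open>auto simp: level_kl_def\<close>)
  from has_sum_diff[OF this] kl_term_summable_on_lists_of_length show ?thesis
    by (simp add: p_mult_cond_kl level_kl_def)
qed

lemma level_kl_0: "level_kl 0 = 0"
proof -
  have "{x :: 'a list. length x = 0} = {[]}" by auto
  then show ?thesis by (simp add: level_kl_def kl_term_def p_Nil q_Nil)
qed

lemma level_kl_le: "level_kl t \<le> - ln w"
proof -
  have bound: "((\<lambda>x. - ln w * p x) has_sum - ln w) {x. length x = t}"
    using has_sum_cmult_right[OF p_has_sum_lists_of_length, of "- ln w"] by simp
  have "level_kl t \<le> (\<Sum>\<^sub>\<infinity>x\<in>{x. length x = t}. - ln w * p x)"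
    unfolding level_kl_def
    by (rule infsum_mono) (use kl_term_summable_on_lists_of_length kl_term_le bound in \<open>auto simp: summable_on_def\<close>)
  also have "\<dots> = - ln w"
    using bound by (simp add: infsumI)
  finally show ?thesis .
qed

lemma suminf_p_mult_cond_kl_le:
  "(\<Sum>t. \<Sum>\<^sub>\<infinity>x\<in>{x. length x = t}. ennreal (p x * cond_kl x)) \<le> ennreal (- ln w)"
proof -
  have level_eq: "(\<Sum>\<^sub>\<infinity>x\<in>{x. length x = t}. ennreal (p x * cond_kl x))
      = ennreal (level_kl (Suc t) - level_kl t)" for t
    using infsum_ennreal_of_nonneg[of "\<lambda>x. p x * cond_kl x" "{x. length x = t}"] has_sum_p_mult_cond_kl[of t]
      p_nonneg cond_kl_nonneg
    by (auto simp: summable_on_def infsumI)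
  have increment_nonneg: "0 \<le> level_kl (Suc t) - level_kl t" for t
    using has_sum_nonneg[OF has_sum_p_mult_cond_kl[of t]] p_nonneg cond_kl_nonneg by simp
  have "(\<Sum>t. \<Sum>\<^sub>\<infinity>x\<in>{x. length x = t}. ennreal (p x * cond_kl x))
      = (SUP n. \<Sum>t<n. ennreal (level_kl (Suc t) - level_kl t))"
    by (simp add: level_eq suminf_eq_SUP)
  also have "\<dots> = (SUP n. ennreal (\<Sum>t<n. level_kl (Suc t) - level_kl t))"
    using increment_nonneg by simp
  also have "\<dots> = (SUP n. ennreal (level_kl n))"
    by (simp add: sum_lessThan_telescope level_kl_0)
  also have "\<dots> \<le> ennreal (- ln w)"
    by (intro SUP_least ennreal_leI level_kl_le)
  finally show ?thesis .
qed

end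

lemma cyl_snoc: "cyl (x @ [a]) = {\<omega>. stake (length x) \<omega> = x \<and> \<omega> !! length x = a}"
  by (auto simp: cyl_def stake_Suc simp del: stake.simps)

lemma cyl_in_sets:
  fixes x :: "'a::countable list"
  assumes "sets \<nu> = sets (stream_space (count_space UNIV))"
  shows "cyl x \<in> sets \<nu>"
proof -
  have "stake (length x) -` {x} \<inter> space (stream_space (count_space UNIV)) \<in> sets (stream_space (count_space UNIV))"
    by (rule measurable_sets[OF measurable_stake]) simp
  moreover have "stake (length x) -` {x} \<inter> space (stream_space (count_space UNIV)) = cyl x"
    by (auto simp: cyl_def space_stream_space)
  ultimately show ?thesis using assms by simp
qed

lemma nn_integral_stake:
  fixes g :: "'a::countable list \<Rightarrow> ennreal"
  assumes sets: "sets \<nu> = sets (stream_space (count_space UNIV))"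
  shows "(\<integral>\<^sup>+\<omega>. g (stake t \<omega>) \<partial>\<nu>) = (\<Sum>\<^sub>\<infinity>x\<in>{x. length x = t}. g x * emeasure \<nu> (cyl x))"
proof -
  let ?L = "{x :: 'a list. length x = t}"
  have "g (stake t \<omega>) = (\<integral>\<^sup>+x. g x * indicator (cyl x) \<omega> \<partial>count_space ?L)" for \<omega>
    by (subst nn_integral_count_space'[of "{stake t \<omega>}"]) (auto simp: cyl_def split: split_indicator)
  then have "(\<integral>\<^sup>+\<omega>. g (stake t \<omega>) \<partial>\<nu>) = (\<integral>\<^sup>+\<omega>. (\<integral>\<^sup>+x. g x * indicator (cyl x) \<omega> \<partial>count_space ?L) \<partial>\<nu>)"
    by simp
  also have "\<dots> = (\<integral>\<^sup>+x. (\<integral>\<^sup>+\<omega>. g x * indicator (cyl x) \<omega> \<partial>\<nu>) \<partial>count_space ?L)"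
    by (rule nn_integral_count_space_nn_integral[OF countable_lists_of_length])
       (use cyl_in_sets[OF sets] in auto)
  also have "\<dots> = (\<Sum>\<^sub>\<infinity>x\<in>?L. g x * emeasure \<nu> (cyl x))"
    by (simp add: nn_integral_cmult_indicator cyl_in_sets[OF sets]
        infsum_eq_nn_integral_count_space[OF countable_lists_of_length])
  finally show ?thesis .
qed

context
  fixes \<nu> :: "'a::countable stream measure"
  assumes sets: "sets \<nu> = sets (stream_space (count_space UNIV))" and prob: "prob_space \<nu>"
begin

interpretation prob_space \<nu> by (rule prob)

lemma emeasure_cyl: "emeasure \<nu> (cyl x) = ennreal (mcyl \<nu> x)"
  by (simp add: mcyl_def emeasure_eq_measure)

lemma mcyl_le_1: "mcyl \<nu> x \<le> 1"
  by (simp add: mcyl_def)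

lemma mcyl_Nil: "mcyl \<nu> [] = 1"
proof -
  have "cyl [] = space \<nu>"
    using sets_eq_imp_space_eq[OF sets] by (auto simp: cyl_def space_stream_space)
  then show ?thesis using prob_space.prob_space[OF prob] by (simp add: mcyl_def)
qed

lemma mcyl_has_sum_snoc: "((\<lambda>a. mcyl \<nu> (x @ [a])) has_sum mcyl \<nu> x) UNIV"
proof (rule has_sum_of_infsum_ennreal)
  have disjoint_union: "cyl x = (\<Union>a. cyl (x @ [a]))" "disjoint_family (\<lambda>a. cyl (x @ [a]))"
    unfolding cyl_snoc by (auto simp: cyl_def disjoint_family_on_def simp del: stake.simps)
  have "(\<Sum>\<^sub>\<infinity>a\<in>UNIV. ennreal (mcyl \<nu> (x @ [a]))) = (\<integral>\<^sup>+a. emeasure \<nu> (cyl (x @ [a])) \<partial>count_space UNIV)"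
    by (simp add: infsum_eq_nn_integral_count_space emeasure_cyl)
  also have "\<dots> = emeasure \<nu> (cyl x)"
    unfolding disjoint_union(1)
    by (rule emeasure_UN_countable[symmetric]) (use cyl_in_sets[OF sets] disjoint_union(2) in auto)
  finally show "(\<Sum>\<^sub>\<infinity>a\<in>UNIV. ennreal (mcyl \<nu> (x @ [a]))) = ennreal (mcyl \<nu> x)"
    by (simp add: emeasure_cyl)
qed (simp_all add: mcyl_def)

end

locale bayes_mixture =
  fixes M :: "('a::countable) stream measure set" and w :: "'a stream measure \<Rightarrow> real"
  assumes countable_M: "countable M"
    and sets_M: "\<And>\<nu>. \<nu> \<in> M \<Longrightarrow> sets \<nu> = sets (stream_space (count_space UNIV))"
    and prob_space_M: "\<And>\<nu>. \<nu> \<in> M \<Longrightarrow> prob_space \<nu>"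
    and weight_bounds: "\<And>\<nu>. \<nu> \<in> M \<Longrightarrow> 0 < w \<nu> \<and> w \<nu> \<le> 1"
    and w_has_sum: "(w has_sum 1) M"
begin

lemma weighted_mcyl_nonneg: "\<nu> \<in> M \<Longrightarrow> 0 \<le> w \<nu> * mcyl \<nu> x"
  using weight_bounds[of \<nu>] by (simp add: mcyl_def)

lemma weighted_mcyl_summable: "(\<lambda>\<nu>. w \<nu> * mcyl \<nu> x) summable_on M"
proof (rule summable_on_comparison_test)
  show "w summable_on M" using w_has_sum by (auto simp: summable_on_def)
  show "w \<nu> * mcyl \<nu> x \<le> w \<nu>" if "\<nu> \<in> M" for \<nu>
    using that weight_bounds[of \<nu>] mcyl_le_1[OF sets_M prob_space_M, of \<nu> x] by (simp add: mult_left_le)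
qed (rule weighted_mcyl_nonneg)

lemma weighted_mcyl_le_xi: "\<nu> \<in> M \<Longrightarrow> w \<nu> * mcyl \<nu> x \<le> xi M w x"
  unfolding xi_def using infsum_mono_neutral[of "\<lambda>\<nu>. w \<nu> * mcyl \<nu> x" "{\<nu>}" _ M]
  by (simp add: weighted_mcyl_summable weighted_mcyl_nonneg)

lemma xi_nonneg: "0 \<le> xi M w x"
  unfolding xi_def by (rule infsum_nonneg) (use weighted_mcyl_nonneg in auto)

lemma xi_Nil: "xi M w [] = 1"
  using infsumI[OF w_has_sum] by (simp add: xi_def mcyl_Nil[OF sets_M prob_space_M] cong: infsum_cong)

lemma xi_has_sum_snoc: "((\<lambda>a. xi M w (x @ [a])) has_sum xi M w x) UNIV"
proof (rule has_sum_of_infsum_ennreal)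
  have "(\<Sum>\<^sub>\<infinity>a\<in>UNIV. ennreal (xi M w (x @ [a])))
      = (\<Sum>\<^sub>\<infinity>a\<in>UNIV. \<Sum>\<^sub>\<infinity>\<nu>\<in>M. ennreal (w \<nu> * mcyl \<nu> (x @ [a])))"
    unfolding xi_def
    by (intro infsum_cong infsum_ennreal_of_nonneg[symmetric] weighted_mcyl_summable weighted_mcyl_nonneg)
  also have "\<dots> = (\<Sum>\<^sub>\<infinity>\<nu>\<in>M. \<Sum>\<^sub>\<infinity>a\<in>UNIV. ennreal (w \<nu> * mcyl \<nu> (x @ [a])))"
    by (rule infsum_swap_ennreal) (auto simp: countable_M)
  also have "\<dots> = (\<Sum>\<^sub>\<infinity>\<nu>\<in>M. ennreal (w \<nu> * mcyl \<nu> x))"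
  proof (rule infsum_cong)
    fix \<nu> assume "\<nu> \<in> M"
    then have "((\<lambda>a. w \<nu> * mcyl \<nu> (x @ [a])) has_sum (w \<nu> * mcyl \<nu> x)) UNIV"
      by (intro has_sum_cmult_right mcyl_has_sum_snoc sets_M prob_space_M)
    then show "(\<Sum>\<^sub>\<infinity>a\<in>UNIV. ennreal (w \<nu> * mcyl \<nu> (x @ [a]))) = ennreal (w \<nu> * mcyl \<nu> x)"
      using infsum_ennreal_of_nonneg[of "\<lambda>a. w \<nu> * mcyl \<nu> (x @ [a])" UNIV] weighted_mcyl_nonneg \<open>\<nu> \<in> M\<close>
      by (auto simp: summable_on_def infsumI)
  qed
  also have "\<dots> = ennreal (xi M w x)"
    unfolding xi_def by (intro infsum_ennreal_of_nonneg weighted_mcyl_summable weighted_mcyl_nonneg)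
  finally show "(\<Sum>\<^sub>\<infinity>a\<in>UNIV. ennreal (xi M w (x @ [a]))) = ennreal (xi M w x)" .
qed (use xi_nonneg in auto)

lemma dominated_prefix_measures_mcyl_xi: "\<nu> \<in> M \<Longrightarrow> dominated_prefix_measures (mcyl \<nu>) (xi M w) (w \<nu>)"
  by unfold_locales
     (use weight_bounds weighted_mcyl_le_xi xi_has_sum_snoc xi_Nil
        mcyl_has_sum_snoc[OF sets_M prob_space_M] mcyl_Nil[OF sets_M prob_space_M] in \<open>auto simp: mcyl_def\<close>)

lemma suminf_mcyl_mult_dkl_le:
  assumes "\<nu> \<in> M"
  shows "(\<Sum>t. \<Sum>\<^sub>\<infinity>x\<in>{x. length x = t}. ennreal (mcyl \<nu> x * dkl M w \<nu> x)) \<le> ennreal (- ln (w \<nu>))"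
proof -
  interpret dominated_prefix_measures "mcyl \<nu>" "xi M w" "w \<nu>"
    using assms by (rule dominated_prefix_measures_mcyl_xi)
  have "dkl M w \<nu> = cond_kl"
    by (simp add: fun_eq_iff dkl_def cond_kl_def cond_kl_term_def)
  then show ?thesis using suminf_p_mult_cond_kl_le by simp
qed

lemma xi_mult_post: "\<nu> \<in> M \<Longrightarrow> xi M w x * post M w \<nu> x = w \<nu> * mcyl \<nu> x"
  using weighted_mcyl_le_xi[of \<nu> x] weighted_mcyl_nonneg[of \<nu> x] by (auto simp: post_def)

end

lemma ennreal_divide_divide:
  assumes "0 < a" "0 < b"
  shows "x / ennreal a / ennreal b = x / ennreal (a * b)"
  using assms by (simp add: divide_ennreal_def inverse_ennreal mult.assoc flip: ennreal_mult)

lemma (in prob_space) prob_Markov_ge: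
  assumes Z: "Z \<in> borel_measurable M" and "0 < \<delta>" and bound: "(\<integral>\<^sup>+x. Z x \<partial>M) \<le> B"
  shows "1 - \<delta> \<le> prob {x \<in> space M. Z x \<le> B / ennreal \<delta>}"
proof -
  define S where "S = {x \<in> space M. B / ennreal \<delta> < Z x}"
  have S_events: "S \<in> events" unfolding S_def using Z by measurable
  have "emeasure M S \<le> ennreal \<delta>"
  proof (cases B rule: ennreal_cases)
    case top
    then have "S = {}" using \<open>0 < \<delta>\<close> by (simp add: S_def ennreal_top_divide)
    then show ?thesis by simp
  next
    case (real b)
    show ?thesis
    proof (cases "b = 0")
      case True
      then have "S = {x \<in> space M. Z x \<noteq> 0}" using real by (auto simp: S_def zero_less_iff_neq_zero)
      moreover have "(\<integral>\<^sup>+x. Z x \<partial>M) = 0" using bound real True by simp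
      ultimately show ?thesis using nn_integral_0_iff[OF Z] by simp
    next
      case False
      with real have b: "0 < b" by simp
      have "ennreal (b / \<delta>) * emeasure M S = (\<integral>\<^sup>+x. ennreal (b / \<delta>) * indicator S x \<partial>M)"
        by (simp add: nn_integral_cmult_indicator S_events)
      also have "\<dots> \<le> (\<integral>\<^sup>+x. Z x \<partial>M)"
        using \<open>0 < \<delta>\<close> b
        by (intro nn_integral_mono) (auto simp: S_def real divide_ennreal split: split_indicator)
      also have "\<dots> \<le> ennreal b" using bound real by simp
      finally have "b / \<delta> * prob S \<le> b"
        using \<open>0 < \<delta>\<close> b by (simp add: emeasure_eq_measure flip: ennreal_mult)
      then have "prob S \<le> \<delta>" using \<open>0 < \<delta>\<close> b by (simp add: field_simps)
      then show ?thesis by (simp add: emeasure_eq_measure ennreal_leI)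
    qed
  qed
  then have "prob S \<le> \<delta>" using \<open>0 < \<delta>\<close> by (simp add: emeasure_eq_measure)
  moreover have "{x \<in> space M. Z x \<le> B / ennreal \<delta>} = space M - S" by (auto simp: S_def)
  ultimately show ?thesis using prob_compl[OF S_events] by simp
qed

context bayes_mixture
begin

definition posterior_divergence :: "'a list \<Rightarrow> ennreal" where
  "posterior_divergence x = (\<Sum>\<^sub>\<infinity>\<nu>\<in>M. ennreal (post M w \<nu> x * dkl M w \<nu> x))"

lemma ct_Suc: "ct M w (Suc t) \<omega> = posterior_divergence (stake t \<omega>)"
  by (simp add: ct_def posterior_divergence_def)

lemma measurable_ct_Suc:
  assumes "sets \<nu> = sets (stream_space (count_space UNIV))"
  shows "ct M w (Suc t) \<in> borel_measurable \<nu>"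
proof -
  have "stake t \<in> measurable \<nu> (count_space UNIV)"
    using measurable_stake measurable_cong_sets[OF assms refl] by blast
  then show ?thesis
    unfolding ct_Suc[abs_def] by (rule measurable_compose[where g = posterior_divergence]) simp
qed

lemma xi_mult_posterior_divergence:
  "ennreal (xi M w x) * posterior_divergence x
     = (\<Sum>\<^sub>\<infinity>\<nu>\<in>M. ennreal (w \<nu>) * ennreal (mcyl \<nu> x * dkl M w \<nu> x))"
  unfolding posterior_divergence_def infsum_cmult_ennreal[OF countable_M, symmetric]
proof (rule infsum_cong)
  fix \<nu> assume \<nu>: "\<nu> \<in> M"
  have "ennreal (xi M w x) * ennreal (post M w \<nu> x * dkl M w \<nu> x)
      = ennreal ((xi M w x * post M w \<nu> x) * dkl M w \<nu> x)"
    using xi_nonneg by (simp add: ennreal_mult' mult.assoc)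
  also have "\<dots> = ennreal (w \<nu> * (mcyl \<nu> x * dkl M w \<nu> x))"
    by (simp add: xi_mult_post[OF \<nu>] mult.assoc)
  also have "\<dots> = ennreal (w \<nu>) * ennreal (mcyl \<nu> x * dkl M w \<nu> x)"
    using weight_bounds[OF \<nu>] by (simp add: ennreal_mult')
  finally show "ennreal (xi M w x) * ennreal (post M w \<nu> x * dkl M w \<nu> x)
      = ennreal (w \<nu>) * ennreal (mcyl \<nu> x * dkl M w \<nu> x)" .
qed

text \<open>Dominating \<mu> by \<xi> / w_\<mu> turns the \<mu>-expectation of c_t into a \<xi>-expectation,
  in which the posterior weights cancel.\<close>

lemma nn_integral_ct_Suc_le:
  assumes "\<mu> \<in> M"
  shows "(\<integral>\<^sup>+\<omega>. ct M w (Suc t) \<omega> \<partial>\<mu>) \<le> ennreal (1 / w \<mu>) *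
           (\<Sum>\<^sub>\<infinity>\<nu>\<in>M. ennreal (w \<nu>) * (\<Sum>\<^sub>\<infinity>x\<in>{x. length x = t}. ennreal (mcyl \<nu> x * dkl M w \<nu> x)))"
proof -
  let ?L = "{x :: 'a list. length x = t}"
  have w\<mu>: "0 < w \<mu>" using weight_bounds[OF assms] by simp
  have mcyl_le: "ennreal (mcyl \<mu> x) \<le> ennreal (1 / w \<mu>) * ennreal (xi M w x)" for x
  proof -
    have "mcyl \<mu> x \<le> 1 / w \<mu> * xi M w x"
      using weighted_mcyl_le_xi[OF assms, of x] w\<mu> by (simp add: field_simps)
    from ennreal_leI[OF this] show ?thesis using w\<mu> xi_nonneg[of x] by (subst ennreal_mult[symmetric]) auto
  qed
  have "(\<integral>\<^sup>+\<omega>. ct M w (Suc t) \<omega> \<partial>\<mu>) = (\<Sum>\<^sub>\<infinity>x\<in>?L. posterior_divergence x * ennreal (mcyl \<mu> x))"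
    using assms by (simp add: ct_Suc nn_integral_stake sets_M emeasure_cyl prob_space_M)
  also have "\<dots> \<le> (\<Sum>\<^sub>\<infinity>x\<in>?L. ennreal (1 / w \<mu>) * (ennreal (xi M w x) * posterior_divergence x))"
    using mult_left_mono[OF mcyl_le, of "posterior_divergence _"]
    by (intro infsum_mono) (auto simp: nonneg_summable_on_complete ac_simps)
  also have "\<dots> = ennreal (1 / w \<mu>) *
      (\<Sum>\<^sub>\<infinity>x\<in>?L. \<Sum>\<^sub>\<infinity>\<nu>\<in>M. ennreal (w \<nu>) * ennreal (mcyl \<nu> x * dkl M w \<nu> x))"
    by (simp add: infsum_cmult_ennreal countable_lists_of_length xi_mult_posterior_divergence)
  also have "\<dots> = ennreal (1 / w \<mu>) *
      (\<Sum>\<^sub>\<infinity>\<nu>\<in>M. ennreal (w \<nu>) * (\<Sum>\<^sub>\<infinity>x\<in>?L. ennreal (mcyl \<nu> x * dkl M w \<nu> x)))"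
    by (simp add: infsum_swap_ennreal[OF countable_lists_of_length countable_M]
        infsum_cmult_ennreal[OF countable_lists_of_length])
  finally show ?thesis .
qed

lemma nn_integral_suminf_ct_le:
  assumes "\<mu> \<in> M"
  shows "(\<integral>\<^sup>+\<omega>. (\<Sum>t. ct M w (Suc t) \<omega>) \<partial>\<mu>) \<le> Ent M w / ennreal (w \<mu>)"
proof -
  have w\<mu>: "0 < w \<mu>" using weight_bounds[OF assms] by simp
  have "(\<integral>\<^sup>+\<omega>. (\<Sum>t. ct M w (Suc t) \<omega>) \<partial>\<mu>) = (\<Sum>t. \<integral>\<^sup>+\<omega>. ct M w (Suc t) \<omega> \<partial>\<mu>)"
    using assms by (intro nn_integral_suminf measurable_ct_Suc sets_M)
  also have "\<dots> \<le> (\<Sum>t. ennreal (1 / w \<mu>) *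
      (\<Sum>\<^sub>\<infinity>\<nu>\<in>M. ennreal (w \<nu>) * (\<Sum>\<^sub>\<infinity>x\<in>{x. length x = t}. ennreal (mcyl \<nu> x * dkl M w \<nu> x))))"
    using assms by (intro suminf_le nn_integral_ct_Suc_le) auto
  also have "\<dots> = ennreal (1 / w \<mu>) *
      (\<Sum>\<^sub>\<infinity>\<nu>\<in>M. ennreal (w \<nu>) * (\<Sum>t. \<Sum>\<^sub>\<infinity>x\<in>{x. length x = t}. ennreal (mcyl \<nu> x * dkl M w \<nu> x)))"
    by (simp add: suminf_infsum_swap_ennreal[OF countable_M])
  also have "\<dots> \<le> ennreal (1 / w \<mu>) * (\<Sum>\<^sub>\<infinity>\<nu>\<in>M. ennreal (w \<nu>) * ennreal (- ln (w \<nu>)))"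
    by (intro mult_left_mono infsum_mono suminf_mcyl_mult_dkl_le) (auto simp: nonneg_summable_on_complete)
  also have "(\<Sum>\<^sub>\<infinity>\<nu>\<in>M. ennreal (w \<nu>) * ennreal (- ln (w \<nu>))) = Ent M w"
    unfolding Ent_def
  proof (rule infsum_cong)
    fix \<nu> assume "\<nu> \<in> M"
    then have "0 \<le> w \<nu>" using weight_bounds[of \<nu>] by simp
    then show "ennreal (w \<nu>) * ennreal (- ln (w \<nu>)) = ennreal (- w \<nu> * ln (w \<nu>))"
      by (simp flip: ennreal_mult')
  qed
  also have "ennreal (1 / w \<mu>) * Ent M w = Ent M w / ennreal (w \<mu>)"
    using w\<mu> by (simp add: divide_ennreal_def inverse_ennreal inverse_eq_divide mult.commute)
  finally show ?thesis .
qed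

end

theorem theorem7:
  fixes M :: "('a::countable) stream measure set"
    and w :: "'a stream measure \<Rightarrow> real"
    and \<mu> :: "'a stream measure"
    and \<delta> :: real
  assumes "countable M"
    and "\<And>\<nu>. \<nu> \<in> M \<Longrightarrow> sets \<nu> = sets (stream_space (count_space UNIV))"
    and "\<And>\<nu>. \<nu> \<in> M \<Longrightarrow> prob_space \<nu>"
    and "\<And>\<nu>. \<nu> \<in> M \<Longrightarrow> 0 < w \<nu> \<and> w \<nu> \<le> 1"
    and "(w has_sum 1) M"
    and "\<mu> \<in> M"
    and "0 < \<delta>" and "\<delta> < 1"
  shows "((\<integral>\<^sup>+ \<omega>. (\<Sum>t. dhat M w \<mu> \<delta> (Suc t) \<omega>) \<partial>\<mu>)
           \<le> Ent M w / ennreal (\<delta> * (w \<mu>)\<^sup>2))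
         \<and> measure \<mu> {\<omega> \<in> space \<mu>. (\<Sum>t. dhat M w \<mu> \<delta> (Suc t) \<omega>)
                                    \<le> Ent M w / ennreal (\<delta>\<^sup>2 * (w \<mu>)\<^sup>2)} \<ge> 1 - \<delta>"
proof -
  interpret bayes_mixture M w by (rule bayes_mixture.intro[OF assms(1-5)])
  interpret \<mu>: prob_space \<mu> using assms(6) by (rule prob_space_M)
  have w\<mu>: "0 < w \<mu>" using weight_bounds[OF assms(6)] by simp
  have ct_measurable[measurable]: "ct M w (Suc t) \<in> borel_measurable \<mu>" for t
    by (rule measurable_ct_Suc[OF sets_M[OF assms(6)]])
  have measurable: "(\<lambda>\<omega>. \<Sum>t. dhat M w \<mu> \<delta> (Suc t) \<omega>) \<in> borel_measurable \<mu>"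
    unfolding dhat_def by measurable
  have "(\<integral>\<^sup>+\<omega>. (\<Sum>t. dhat M w \<mu> \<delta> (Suc t) \<omega>) \<partial>\<mu>)
      = (\<integral>\<^sup>+\<omega>. (\<Sum>t. ct M w (Suc t) \<omega>) \<partial>\<mu>) / ennreal (w \<mu> * \<delta>)"
    unfolding dhat_def by (simp add: nn_integral_divide)
  also have "\<dots> \<le> Ent M w / ennreal (w \<mu>) / ennreal (w \<mu> * \<delta>)"
    by (intro divide_right_mono_ennreal nn_integral_suminf_ct_le assms(6))
  also have "\<dots> = Ent M w / ennreal (\<delta> * (w \<mu>)\<^sup>2)"
    using w\<mu> assms(7) by (simp add: ennreal_divide_divide power2_eq_square ac_simps)
  finally have expectation: "(\<integral>\<^sup>+\<omega>. (\<Sum>t. dhat M w \<mu> \<delta> (Suc t) \<omega>) \<partial>\<mu>) \<le> Ent M w / ennreal (\<delta> * (w \<mu>)\<^sup>2)" .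
  have "Ent M w / ennreal (\<delta> * (w \<mu>)\<^sup>2) / ennreal \<delta> = Ent M w / ennreal (\<delta>\<^sup>2 * (w \<mu>)\<^sup>2)"
    using w\<mu> assms(7) by (simp add: ennreal_divide_divide power2_eq_square ac_simps)
  with \<mu>.prob_Markov_ge[OF measurable assms(7) expectation] expectation show ?thesis by simp
qed

end
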